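(* Let $\lambda\in\mathbb R$, $G_\lambda(x)=\frac{x^3}{8} - \frac{\lambda x^2}{2} + \frac{\lambda^2 x}{2}$, and let $r\ge 0$ be a constant. For integers $k$ with $(1\vee 3\lambda) n^{2/3}\le k \le n^{3/4}$ and $|\lambda|\le n^{1/12}$, \[\frac{1}{n^{2/3}}\sum_{j=k}^{\lfloor n^{3/4}\rfloor} \Big(\frac{j}{n^{2/3}}\Big)^{r} e^{-G_\lambda(j/n^{2/3})} = \frac{(k/n^{2/3})^{r}}{G'_\lambda(k/n^{2/3})} e^{-G_\lambda(k/n^{2/3})} \Big(1+O\big(\tfrac{n^2}{k^3}\big)\Big) + O\big(n^{(r-2)/12}e^{-G_\lambda(n^{1/12})}\big).\]
   Context: $G'_\lambda$ is the derivative of $G_\lambda$; $x\vee y=\max(x,y)$. $f=g(1+O(h))+O(h')$ means $|f-g|\le C|g|h+Ch'$ for a constant $C$ depending only on $r$, for all sufficiently large $n$ and all parameters satisfying the hypotheses. *)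

theory Defs
  imports "HOL-Analysis.Analysis"
begin

definition G :: "real \<Rightarrow> real \<Rightarrow> real" where
  "G lam x = x ^ 3 / 8 - lam * x ^ 2 / 2 + lam ^ 2 * x / 2"

end

theory Submission
  imports Defs "HOL-Complex_Analysis.Weierstrass_Factorization"
begin

(* With F(y) = y^r exp(-G(y)) and Phi = F / G', one has Phi' = -F (1 + delta), where
   delta = G''/G'^2 - r/(y G') = O(y^-3) on the region y >= max 1 (3 lam), because there G' is of
   the order y^2 + lam^2.  With mesh h = n^(-2/3) and w = n^(1/12) bounding both the grid and |lam|,
   the mean value theorem gives h F(jh) = Phi(jh) - Phi((j+1)h) up to a relative error
   O(w^2 h + x^-3) = O(x^-3), where x = kh.  These differences telescope to Phi(x) - Phi((J+1)h).
   The accumulated error is O(x^-3) times the sum itself, hence O(x^-3 Phi(x)): the quadratic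
   growth of G beyond its tangent at x dominates the sum by a geometric series of ratio
   exp(-G'(x) h).  The boundary term Phi((J+1)h), taken just above w, is the second error term. *)

lemma powr_le_powr_mult_exp:
  fixes x y r :: real
  assumes "1 \<le> x" "x \<le> y" "0 \<le> r"
  shows "y powr r \<le> x powr r * exp (r * (y - x))"
proof -
  have "ln (y / x) \<le> y / x - 1" using assms by (intro ln_le_minus_one) simp
  also have "\<dots> = (y - x) / x" using assms by (simp add: field_simps)
  also have "\<dots> \<le> y - x" using assms by (simp add: divide_le_eq mult_le_cancel_left1)
  finally have "(y / x) powr r \<le> exp (r * (y - x))"
    using assms by (simp add: powr_def mult_left_mono)
  moreover have "y powr r = x powr r * (y / x) powr r"
    using assms by (simp add: powr_divide)
  ultimately show ?thesis by (simp add: mult_left_mono)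
qed

lemma abs_one_minus_exp_perturb_le:
  fixes t d :: real
  assumes "\<bar>t\<bar> \<le> 1/2"
  shows "\<bar>(1 - exp t) - exp t * d\<bar> \<le> 2 * \<bar>t\<bar> + 2 * \<bar>d\<bar>"
proof -
  have "\<bar>exp t - 1\<bar> \<le> 3/2 * \<bar>t\<bar>" "exp t \<le> 2"
    using norm_exp_bounds(2)[of t] exp_bound_half[of t] assms by simp_all
  moreover have "\<bar>(1 - exp t) - exp t * d\<bar> \<le> \<bar>exp t - 1\<bar> + exp t * \<bar>d\<bar>"
    by (metis abs_minus_commute abs_mult abs_of_pos exp_gt_zero abs_triangle_ineq4)
  moreover have "exp t * \<bar>d\<bar> \<le> 2 * \<bar>d\<bar>"
    using \<open>exp t \<le> 2\<close> by (intro mult_right_mono) auto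
  ultimately show ?thesis by linarith
qed

lemma sum_geometric_le:
  fixes q :: real
  assumes "0 \<le> q" "q < 1"
  shows "(\<Sum>j = k..J. q ^ (j - k)) \<le> 1 / (1 - q)"
proof (cases "k \<le> J")
  case True
  have "(\<Sum>j = k..J. q ^ (j - k)) = (\<Sum>i < Suc (J - k). q ^ i)"
    using True by (intro sum.reindex_bij_witness[of _ "\<lambda>i. i + k" "\<lambda>j. j - k"]) auto
  also have "\<dots> = (1 - q ^ Suc (J - k)) / (1 - q)"
    using assms by (simp only: sum_gp_strict) simp
  also have "\<dots> \<le> 1 / (1 - q)"
    using assms by (intro divide_right_mono) auto
  finally show ?thesis .
qed (use assms in simp)

lemma sum_telescoping_approx:
  fixes a b :: "nat \<Rightarrow> real"
  assumes "\<And>j. j \<in> {k..J} \<Longrightarrow> \<bar>a j - (b j - b (Suc j))\<bar> \<le> e * a j" "k \<le> Suc J"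
  shows "\<bar>(\<Sum>j = k..J. a j) - (b k - b (Suc J))\<bar> \<le> e * (\<Sum>j = k..J. a j)"
proof -
  have "b k - b (Suc J) = (\<Sum>j = k..J. b j - b (Suc j))"
    using sum_Suc_diff[OF assms(2), of b] by (simp add: sum_subtractf)
  then have "\<bar>(\<Sum>j = k..J. a j) - (b k - b (Suc J))\<bar> = \<bar>\<Sum>j = k..J. a j - (b j - b (Suc j))\<bar>"
    by (simp add: sum_subtractf)
  also have "\<dots> \<le> (\<Sum>j = k..J. e * a j)"
    using assms(1) by (intro order_trans[OF sum_abs] sum_mono)
  finally show ?thesis by (simp add: sum_distrib_left)
qed

definition G' :: "real \<Rightarrow> real \<Rightarrow> real" where
  "G' lam x = 3 * x ^ 2 / 8 - lam * x + lam ^ 2 / 2"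

definition G'' :: "real \<Rightarrow> real \<Rightarrow> real" where
  "G'' lam x = 3 * x / 4 - lam"

lemma has_real_derivative_G: "(G lam has_real_derivative G' lam x) (at x)"
  unfolding G_def[abs_def] G'_def
  by (auto intro!: derivative_eq_intros simp: field_simps power2_eq_square power3_eq_cube)

lemma deriv_G: "deriv (G lam) x = G' lam x"
  using has_real_derivative_G by (rule DERIV_imp_deriv)

lemma has_real_derivative_G': "(G' lam has_real_derivative G'' lam x) (at x)"
  unfolding G'_def[abs_def] G''_def
  by (auto intro!: derivative_eq_intros simp: field_simps power2_eq_square)

lemma G_taylor:
  "G lam y = G lam x + G' lam x * (y - x) + G'' lam x * (y - x)^2 / 2 + (y - x)^3 / 8"
  unfolding G_def G'_def G''_def by (simp add: field_simps power2_eq_square power3_eq_cube)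

lemma G'_lower_bound:
  assumes "3 * lam \<le> x" "0 \<le> x"
  shows "x^2 + lam^2 \<le> 20 * G' lam x"
proof -
  define s where "s = x/3 - lam"
  have "20 * G' lam x - (x^2 + lam^2) = 20 * (x^2/24 + 7/10 * s * x + 9/20 * s^2)"
    unfolding G'_def s_def by (simp add: field_simps power2_eq_square)
  moreover have "0 \<le> x^2/24 + 7/10 * s * x + 9/20 * s^2" using assms s_def by simp
  ultimately show ?thesis by argo
qed

lemma G'_pos:
  assumes "1 \<le> x" "3 * lam \<le> x"
  shows "0 < G' lam x"
proof -
  have "1 \<le> x^2" using assms by simp
  then show ?thesis using G'_lower_bound[OF assms(2)] assms(1) zero_le_power2[of lam] by linarith
qed

lemma G'_upper_bound: "G' lam y \<le> 2 * (\<bar>y\<bar> + \<bar>lam\<bar>)^2"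
proof -
  have "- (lam * y) \<le> \<bar>y\<bar> * \<bar>lam\<bar>"
    by (metis abs_ge_minus_self abs_mult mult.commute)
  moreover have "(\<bar>y\<bar> + \<bar>lam\<bar>)^2 = y^2 + lam^2 + 2 * (\<bar>y\<bar> * \<bar>lam\<bar>)"
    by (simp add: power2_sum)
  moreover have "0 \<le> y^2" "0 \<le> lam^2" "0 \<le> \<bar>y\<bar> * \<bar>lam\<bar>" by simp_all
  ultimately show ?thesis unfolding G'_def by linarith
qed

lemma G''_lower_bound: "3 * lam \<le> x \<Longrightarrow> 5 * x / 12 \<le> G'' lam x"
  unfolding G''_def by simp

lemma G_mono:
  assumes "3 * lam \<le> x" "0 \<le> x" "x \<le> y"
  shows "G lam x \<le> G lam y"
proof -
  have "0 \<le> G' lam x" using G'_lower_bound[OF assms(1,2)] zero_le_power2[of x] zero_le_power2[of lam] by linarith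
  moreover have "0 \<le> G'' lam x" using G''_lower_bound[OF assms(1)] assms(2) by linarith
  ultimately show ?thesis using G_taylor[of lam y x] assms(3) by simp
qed

lemma G_quadratic_growth:
  assumes "3 * lam \<le> x" "1 \<le> x" "x \<le> y"
  shows "G lam x + G' lam x * (y - x) + 5/24 * (y - x)^2 \<le> G lam y"
proof -
  have "5/12 * (y - x)^2 \<le> G'' lam x * (y - x)^2"
    using G''_lower_bound[OF assms(1)] assms(2) by (intro mult_right_mono) auto
  moreover have "0 \<le> (y - x)^3" using assms(3) by simp
  ultimately show ?thesis using G_taylor[of lam y x] by linarith
qed

lemma G_increment_le:
  assumes "3 * lam \<le> x" "1 \<le> x" "x \<le> y" "y - x \<le> 1"
  shows "G lam y - G lam x \<le> G' lam y * (y - x)"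
proof -
  have "5/12 \<le> G'' lam y" using G''_lower_bound[of lam y] assms by linarith
  then have "0 \<le> (y - x)^2 * (G'' lam y / 2 - (y - x) / 8)" using assms(4) by simp
  moreover have "G lam x = G lam y - G' lam y * (y - x) + (y - x)^2 * (G'' lam y / 2 - (y - x) / 8)"
    using G_taylor[of lam x y] by (simp add: field_simps power2_eq_square power3_eq_cube)
  ultimately show ?thesis by linarith
qed

definition F :: "real \<Rightarrow> real \<Rightarrow> real \<Rightarrow> real" where
  "F r lam y = y powr r * exp (- G lam y)"

definition Phi :: "real \<Rightarrow> real \<Rightarrow> real \<Rightarrow> real" where
  "Phi r lam y = F r lam y / G' lam y"

definition delta :: "real \<Rightarrow> real \<Rightarrow> real \<Rightarrow> real" where
  "delta r lam y = G'' lam y / (G' lam y)^2 - r / (y * G' lam y)"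

lemma F_nonneg: "0 \<le> F r lam y"
  unfolding F_def by simp

lemma Phi_nonneg: "1 \<le> y \<Longrightarrow> 3 * lam \<le> y \<Longrightarrow> 0 \<le> Phi r lam y"
  unfolding Phi_def using F_nonneg G'_pos by (simp add: less_imp_le)

lemma Phi_altdef: "Phi r lam y = y powr r / G' lam y * exp (- G lam y)"
  unfolding Phi_def F_def by simp

lemma has_real_derivative_Phi:
  assumes "0 < y" "G' lam y \<noteq> 0"
  shows "(Phi r lam has_real_derivative - F r lam y * (1 + delta r lam y)) (at y)"
proof -
  have powr: "((\<lambda>y. y powr r) has_real_derivative r * y powr (r - 1)) (at y)"
    using has_real_derivative_powr[OF assms(1)] .
  have exp: "((\<lambda>y. exp (- G lam y)) has_real_derivative exp (- G lam y) * (- G' lam y)) (at y)"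
    by (intro DERIV_fun_exp DERIV_minus has_real_derivative_G)
  have "y powr (r - 1) = y powr r / y" using assms by (simp add: powr_diff)
  show ?thesis
    unfolding Phi_def[abs_def] F_def[abs_def]
    by (rule DERIV_cong[OF DERIV_divide[OF DERIV_mult[OF powr exp] has_real_derivative_G' assms(2)]])
       (use \<open>y powr (r - 1) = y powr r / y\<close> assms in \<open>simp add: delta_def field_simps power2_eq_square\<close>)
qed

lemma abs_delta_le:
  assumes "0 \<le> r" "1 \<le> y" "3 * lam \<le> y"
  shows "\<bar>delta r lam y\<bar> \<le> (800 + 20 * r) / y^3"
proof -
  define Q where "Q = y^2 + lam^2"
  have Q_le: "Q \<le> 20 * G' lam y" using G'_lower_bound assms Q_def by simp
  have y_le: "y^2 \<le> Q" and Q_nonneg: "0 \<le> Q" unfolding Q_def by simp_all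
  have G'_pos: "0 < G' lam y" using G'_pos assms by simp
  have "\<bar>G'' lam y\<bar> * y \<le> 2 * Q"
  proof -
    have "\<bar>G'' lam y\<bar> * y \<le> (3 * y / 4 + \<bar>lam\<bar>) * y"
      unfolding G''_def using assms by (intro mult_right_mono) auto
    then have "\<bar>G'' lam y\<bar> * y \<le> 3/4 * y^2 + \<bar>lam\<bar> * y"
      by (simp add: algebra_simps power2_eq_square)
    moreover have "2 * (\<bar>lam\<bar> * y) \<le> y^2 + lam^2"
      using sum_squares_bound[of "\<bar>lam\<bar>" y] by (simp add: power2_eq_square)
    moreover have "0 \<le> y^2" "0 \<le> lam^2" by simp_all
    ultimately show ?thesis unfolding Q_def by argo
  qed
  then have "\<bar>G'' lam y\<bar> * y * y^2 \<le> 2 * Q * Q"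
    using y_le by (rule mult_mono) (simp_all add: Q_nonneg)
  also have "\<dots> \<le> 2 * (20 * G' lam y) * (20 * G' lam y)"
    using Q_le Q_nonneg G'_pos by (intro mult_mono) auto
  finally have "\<bar>G'' lam y / (G' lam y)^2\<bar> \<le> 800 / y^3"
    using G'_pos assms by (simp add: field_simps abs_divide power2_eq_square power3_eq_cube)
  moreover have "r * y^2 \<le> r * (20 * G' lam y)"
    using Q_le y_le assms by (intro mult_left_mono) auto
  then have "\<bar>r / (y * G' lam y)\<bar> \<le> 20 * r / y^3"
    using G'_pos assms by (simp add: field_simps abs_divide power2_eq_square power3_eq_cube)
  ultimately show ?thesis
    unfolding delta_def add_divide_distrib by (metis abs_triangle_ineq4 add_mono order_trans)
qed

lemma F_decay:
  assumes "0 \<le> r" "1 \<le> x" "3 * lam \<le> x" "x \<le> y"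
  shows "F r lam y \<le> F r lam x * exp (6 * r^2 / 5) * exp (- G' lam x * (y - x))"
proof -
  define t where "t = y - x"
  have "r * t - 5/24 * t^2 \<le> 6 * r^2 / 5"
  proof -
    have "6 * r^2 / 5 - (r * t - 5/24 * t^2) = 5/24 * (t - 12 * r / 5)^2"
      by (simp add: power2_eq_square algebra_simps)
    moreover have "0 \<le> 5/24 * (t - 12 * r / 5)^2" by simp
    ultimately show ?thesis by linarith
  qed
  then have "r * t - G lam y \<le> - G lam x - G' lam x * t + 6 * r^2 / 5"
    using G_quadratic_growth[OF assms(3,2,4)] unfolding t_def by linarith
  then have exp: "exp (r * t) * exp (- G lam y) \<le> exp (- G lam x) * exp (6 * r^2 / 5) * exp (- G' lam x * t)"
    by (simp add: mult_exp_exp)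
  have "F r lam y \<le> (x powr r * exp (r * t)) * exp (- G lam y)"
    unfolding F_def t_def using powr_le_powr_mult_exp assms by (intro mult_right_mono) simp_all
  also have "\<dots> \<le> x powr r * (exp (- G lam x) * exp (6 * r^2 / 5) * exp (- G' lam x * t))"
    unfolding mult.assoc[symmetric] using exp by (simp add: mult.assoc mult_left_mono)
  finally show ?thesis unfolding F_def t_def by (simp add: mult_ac)
qed

lemma F_ratio:
  assumes "0 < a" "0 < z"
  shows "F r lam z = F r lam a * exp (r * ln (z / a) - (G lam z - G lam a))"
  using assms unfolding F_def powr_def by (simp add: mult_exp_exp ln_div algebra_simps)

lemma log_F_ratio_bound:
  assumes "0 \<le> r" "1 \<le> a" "3 * lam \<le> a" "a \<le> z" "z \<le> a + h" "h \<le> 1" "G' lam z \<le> M"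
  shows "\<bar>r * ln (z / a) - (G lam z - G lam a)\<bar> \<le> (r + M) * h"
proof -
  have "ln (z / a) \<le> z / a - 1" using assms by (intro ln_le_minus_one) simp
  also have "\<dots> = (z - a) / a" using assms by (simp add: field_simps)
  also have "\<dots> \<le> z - a" using assms by (simp add: divide_le_eq mult_le_cancel_left1)
  also have "\<dots> \<le> h" using assms by simp
  finally have "0 \<le> r * ln (z / a)" "r * ln (z / a) \<le> r * h"
    using assms by (simp_all add: mult_left_mono)
  moreover have "0 \<le> G lam z - G lam a" using G_mono assms by force
  moreover have "G lam z - G lam a \<le> G' lam z * (z - a)" using G_increment_le assms by force
  moreover have "G' lam z * (z - a) \<le> M * h"
    using assms G'_pos[of z lam] by (intro mult_mono) auto
  ultimately show ?thesis by (simp add: abs_le_iff algebra_simps)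
qed

lemma Phi_step_error:
  assumes r: "0 \<le> r" and a: "1 \<le> a" "3 * lam \<le> a" and h: "0 < h" "h \<le> 1"
    and M: "\<And>z. a \<le> z \<Longrightarrow> z \<le> a + h \<Longrightarrow> G' lam z \<le> M"
    and small: "(r + M) * h \<le> 1/2"
  shows "\<bar>h * F r lam a - (Phi r lam a - Phi r lam (a + h))\<bar>
     \<le> h * F r lam a * (2 * (r + M) * h + 2 * (800 + 20 * r) / a^3)"
proof -
  have "(Phi r lam has_real_derivative - F r lam y * (1 + delta r lam y)) (at y)"
    if "a \<le> y" for y
    using that a G'_pos[of y lam] by (intro has_real_derivative_Phi) auto
  then obtain z where z: "a < z" "z < a + h"
    and mvt: "Phi r lam (a + h) - Phi r lam a = h * (- F r lam z * (1 + delta r lam z))"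
    using MVT2[of a "a + h" "Phi r lam" "\<lambda>y. - F r lam y * (1 + delta r lam y)"] h by auto
  define t where "t = r * ln (z / a) - (G lam z - G lam a)"
  have F_z: "F r lam z = F r lam a * exp t"
    unfolding t_def using F_ratio a z by simp
  have t: "\<bar>t\<bar> \<le> (r + M) * h"
    unfolding t_def using log_F_ratio_bound[OF r a _ _ h(2) M] z by simp
  have "\<bar>delta r lam z\<bar> \<le> (800 + 20 * r) / z^3"
    using abs_delta_le r a z by simp
  also have "\<dots> \<le> (800 + 20 * r) / a^3"
    using a z r by (intro divide_left_mono power_mono) auto
  finally have delta: "\<bar>delta r lam z\<bar> \<le> (800 + 20 * r) / a^3" .
  have "\<bar>(1 - exp t) - exp t * delta r lam z\<bar> \<le> 2 * \<bar>t\<bar> + 2 * \<bar>delta r lam z\<bar>"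
    using t small by (intro abs_one_minus_exp_perturb_le) linarith
  also have "\<dots> \<le> 2 * (r + M) * h + 2 * (800 + 20 * r) / a^3"
    using t delta by linarith
  finally have "\<bar>(1 - exp t) - exp t * delta r lam z\<bar> \<le> 2 * (r + M) * h + 2 * (800 + 20 * r) / a^3" .
  moreover have "h * F r lam a - (Phi r lam a - Phi r lam (a + h))
      = h * F r lam a * ((1 - exp t) - exp t * delta r lam z)"
    using mvt unfolding F_z by (simp add: algebra_simps)
  ultimately show ?thesis
    using h F_nonneg[of r lam a] by (simp add: abs_mult mult_left_mono)
qed

lemma F_grid_sum_le:
  assumes r: "0 \<le> r" and m: "0 < m" and x: "1 \<le> real k / m" "3 * lam \<le> real k / m"
    and small: "G' lam (real k / m) / m \<le> 1/2"
  shows "(1 / m) * (\<Sum>j = k..J. F r lam (real j / m)) \<le> 2 * exp (6 * r^2 / 5) * Phi r lam (real k / m)"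
proof -
  define x where "x = real k / m"
  define K where "K = exp (6 * r^2 / 5)"
  define v where "v = G' lam x / m"
  have v: "0 < v" "v \<le> 1/2" unfolding v_def x_def using G'_pos x m small by auto
  have "F r lam (real j / m) \<le> F r lam x * K * exp (- v) ^ (j - k)" if "j \<in> {k..J}" for j
  proof -
    have "real j / m - x = real (j - k) / m"
      using that unfolding x_def by (auto simp: of_nat_diff diff_divide_distrib)
    moreover have "x \<le> real j / m" using that m unfolding x_def by (simp add: divide_right_mono)
    ultimately show ?thesis
      using F_decay[OF r x[folded x_def], of "real j / m"]
      unfolding K_def v_def by (simp add: exp_of_nat_mult[symmetric] algebra_simps)
  qed
  then have "(\<Sum>j = k..J. F r lam (real j / m)) \<le> F r lam x * K * (\<Sum>j = k..J. exp (- v) ^ (j - k))"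
    unfolding sum_distrib_left by (rule sum_mono)
  also have "\<dots> \<le> F r lam x * K * (1 / (1 - exp (- v)))"
    using v F_nonneg by (intro mult_left_mono sum_geometric_le) (auto simp: K_def)
  also have "\<dots> \<le> F r lam x * K * (2 / v)"
  proof -
    have "1/2 * v \<le> \<bar>exp (- v) - 1\<bar>" using norm_exp_bounds(1)[of "- v"] v by simp
    then have "v / 2 \<le> 1 - exp (- v)" using v by simp
    then show ?thesis using v F_nonneg by (intro mult_left_mono) (auto simp: K_def field_simps)
  qed
  finally show ?thesis
    using m x G'_pos[of x lam] unfolding Phi_def K_def v_def x_def by (simp add: field_simps)
qed

lemma Phi_boundary_bound:
  assumes r: "0 \<le> r" and w: "1 \<le> w" "3 * lam \<le> w" and y: "w \<le> y" "y \<le> 2 * w"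
  shows "Phi r lam y \<le> 20 * 2 powr r * w powr (r - 2) * exp (- G lam w)"
proof -
  have "w^2 \<le> y^2" using w y by (intro power_mono) auto
  moreover have "y^2 + lam^2 \<le> 20 * G' lam y" using G'_lower_bound w y by simp
  ultimately have "w^2 / 20 \<le> G' lam y" using zero_le_power2[of lam] by linarith
  moreover have "y powr r \<le> 2 powr r * w powr r"
    using powr_mono2[of r y "2 * w"] w y r by (simp add: powr_mult)
  moreover have "exp (- G lam y) \<le> exp (- G lam w)" using G_mono w y by simp
  ultimately have "Phi r lam y \<le> (2 powr r * w powr r) * exp (- G lam w) / (w^2 / 20)"
    unfolding Phi_def F_def using w by (intro frac_le mult_mono) auto
  also have "\<dots> = 20 * 2 powr r * (w powr r / w powr 2) * exp (- G lam w)"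
    using w by (simp add: powr_numeral field_simps)
  finally show ?thesis using w by (simp add: powr_diff)
qed

lemma grid_mesh_small:
  fixes r m w :: real
  assumes "0 \<le> r" "0 < m" "1 \<le> w" "(r + 18) * w^2 / m \<le> 1/2"
  shows "w^2 / m \<le> 1/36" "1 / m \<le> 1/36"
proof -
  have "18 * (w^2 / m) \<le> (r + 18) * w^2 / m"
    unfolding times_divide_eq_right[symmetric] using assms by (intro mult_right_mono) auto
  then show w2m: "w^2 / m \<le> 1/36" using assms(4) by linarith
  have "1 / m \<le> w^2 / m" using assms by (simp add: divide_right_mono)
  with w2m show "1 / m \<le> 1/36" by linarith
qed

lemma F_grid_step_error:
  assumes r: "0 \<le> r" and m: "0 < m" and x: "1 \<le> x" "3 * lam \<le> x" and lam: "\<bar>lam\<bar> \<le> w"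
    and a: "x \<le> a" "a \<le> w" and small: "(r + 18) * w^2 / m \<le> 1/2" "w^5 / m \<le> 1"
  shows "\<bar>(1/m) * F r lam a - (Phi r lam a - Phi r lam (a + 1/m))\<bar>
     \<le> (1/m) * F r lam a * ((2 * (r + 18) + 2 * (800 + 20 * r)) / x^3)"
proof -
  have w: "1 \<le> w" "1 \<le> w^2" using x a by simp_all
  note h = grid_mesh_small(2)[OF r m w(1) small(1)]
  have M: "G' lam z \<le> 18 * w^2" if "a \<le> z" "z \<le> a + 1/m" for z
  proof -
    have "\<bar>z\<bar> + \<bar>lam\<bar> \<le> 3 * w" using that x a lam w h by auto
    then have "(\<bar>z\<bar> + \<bar>lam\<bar>)^2 \<le> (3 * w)^2" by (intro power_mono) auto
    then show ?thesis using G'_upper_bound[of lam z] by (simp add: power_mult_distrib)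
  qed
  have rM_le: "(r + 18 * w^2) * (1/m) \<le> (r + 18) * (w^2 / m)"
    using mult_left_mono[OF w(2) r] m by (simp add: field_simps)
  moreover have "(r + 18) * (w^2 / m) \<le> 1/2" using small(1) by simp
  ultimately have rM: "(r + 18 * w^2) * (1/m) \<le> 1/2" by linarith
  have step: "\<bar>(1/m) * F r lam a - (Phi r lam a - Phi r lam (a + 1/m))\<bar>
      \<le> (1/m) * F r lam a * (2 * (r + 18 * w^2) * (1/m) + 2 * (800 + 20 * r) / a^3)"
    using x a m h rM by (intro Phi_step_error r M) auto
  have "x^3 * (w^2 / m) \<le> w^3 * (w^2 / m)"
    using x a m by (intro mult_right_mono power_mono) auto
  also have "\<dots> = w^5 / m" by (simp add: power_add[symmetric])
  finally have "w^2 / m \<le> 1 / x^3" using small(2) x by (simp add: field_simps)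
  then have "(r + 18) * (w^2 / m) \<le> (r + 18) * (1 / x^3)"
    using r by (intro mult_left_mono) auto
  then have "2 * ((r + 18 * w^2) * (1/m)) \<le> 2 * ((r + 18) * (1 / x^3))"
    using rM_le by linarith
  moreover have "2 * (800 + 20 * r) / a^3 \<le> 2 * (800 + 20 * r) / x^3"
    using x a r by (intro divide_left_mono power_mono) auto
  ultimately have "2 * (r + 18 * w^2) * (1/m) + 2 * (800 + 20 * r) / a^3
      \<le> (2 * (r + 18) + 2 * (800 + 20 * r)) / x^3"
    by (simp add: add_divide_distrib)
  with m F_nonneg[of r lam a] show ?thesis by (intro order_trans[OF step] mult_left_mono) auto
qed

lemma F_grid_sum_approx:
  assumes r: "0 \<le> r" and m: "0 < m" and kJ: "k \<le> J"
    and x: "1 \<le> real k / m" "3 * lam \<le> real k / m" and lam: "\<bar>lam\<bar> \<le> w"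
    and J: "real J / m \<le> w" "w < real (Suc J) / m"
    and small: "(r + 18) * w^2 / m \<le> 1/2" "w^5 / m \<le> 1"
  shows "\<bar>(1/m) * (\<Sum>j = k..J. F r lam (real j / m)) - Phi r lam (real k / m)\<bar>
     \<le> 2 * exp (6 * r^2 / 5) * (2 * (r + 18) + 2 * (800 + 20 * r))
         * Phi r lam (real k / m) / (real k / m)^3
       + 20 * 2 powr r * w powr (r - 2) * exp (- G lam w)"
proof -
  define x where "x = real k / m"
  define E where "E = (2 * (r + 18) + 2 * (800 + 20 * r)) / x^3"
  define S where "S = (1/m) * (\<Sum>j = k..J. F r lam (real j / m))"
  have grid: "x \<le> real j / m" "real j / m \<le> w" if "j \<in> {k..J}" for j
    using that m J(1) divide_right_mono[of k j m] divide_right_mono[of j J m] unfolding x_def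
    by auto
  have w: "1 \<le> w" "x \<le> w" using grid[of k] x kJ unfolding x_def by auto
  note w2m = grid_mesh_small(1)[OF r m w(1) small(1)] and h = grid_mesh_small(2)[OF r m w(1) small(1)]
  have "\<bar>(\<Sum>j = k..J. (1/m) * F r lam (real j / m))
        - (Phi r lam (real k / m) - Phi r lam (real (Suc J) / m))\<bar>
      \<le> E * (\<Sum>j = k..J. (1/m) * F r lam (real j / m))"
  proof (rule sum_telescoping_approx)
    fix j assume j: "j \<in> {k..J}"
    have "real (Suc j) / m = real j / m + 1/m" by (simp add: add_divide_distrib)
    then show "\<bar>(1/m) * F r lam (real j / m) - (Phi r lam (real j / m) - Phi r lam (real (Suc j) / m))\<bar>
        \<le> E * ((1/m) * F r lam (real j / m))"
      using F_grid_step_error[OF r m x[folded x_def] lam grid[OF j] small] unfolding E_def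
      by (simp add: mult_ac)
  qed (use kJ in simp)
  then have telescope: "\<bar>S - (Phi r lam x - Phi r lam (real (Suc J) / m))\<bar> \<le> E * S"
    unfolding S_def x_def by (simp add: sum_distrib_left)
  have "(\<bar>x\<bar> + \<bar>lam\<bar>)^2 \<le> (2 * w)^2"
    using w lam x unfolding x_def by (intro power_mono) auto
  then have "G' lam x \<le> 8 * w^2"
    using G'_upper_bound[of lam x] by (simp add: power_mult_distrib)
  then have "G' lam x / m \<le> 1/2" using w2m m by (simp add: divide_right_mono)
  then have "S \<le> 2 * exp (6 * r^2 / 5) * Phi r lam x"
    unfolding S_def x_def by (intro F_grid_sum_le r m x)
  moreover have "0 \<le> E" unfolding E_def using r x_def x by simp
  ultimately have "E * S \<le> E * (2 * exp (6 * r^2 / 5) * Phi r lam x)" by (rule mult_left_mono)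
  moreover have "w \<le> real (Suc J) / m" "real (Suc J) / m \<le> 2 * w"
    using J w h by (auto simp: add_divide_distrib)
  then have "0 \<le> Phi r lam (real (Suc J) / m)"
    and "Phi r lam (real (Suc J) / m) \<le> 20 * 2 powr r * w powr (r - 2) * exp (- G lam w)"
    using Phi_nonneg Phi_boundary_bound r w x unfolding x_def by auto
  ultimately show ?thesis
    using telescope unfolding S_def[symmetric] x_def[symmetric] E_def by (simp add: field_simps)
qed

lemma scaled_grid_parameters:
  fixes n r :: real
  assumes n: "1 \<le> n" "(2 * (r + 18))^2 \<le> n" and r: "0 \<le> r"
  defines "m \<equiv> n powr (2/3)" and "w \<equiv> n powr (1/12)" and "J \<equiv> nat \<lfloor>n powr (3/4)\<rfloor>"
  shows "0 < m" "real J / m \<le> w" "w < real (Suc J) / m"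
    and "(r + 18) * w^2 / m \<le> 1/2" "w^5 / m \<le> 1"
    and "m^3 = n^2" "w powr (r - 2) = n powr ((r - 2) / 12)"
proof -
  have n0: "n \<noteq> 0" using n by simp
  show m: "0 < m" unfolding m_def using n by simp
  have w: "w = n powr (3/4) / m"
    unfolding m_def w_def by (simp flip: powr_diff)
  have "real J \<le> n powr (3/4)" "n powr (3/4) < real (Suc J)"
    unfolding J_def using n by (simp_all add: of_nat_nat) linarith
  with m show "real J / m \<le> w" "w < real (Suc J) / m"
    unfolding w by (simp_all add: divide_right_mono divide_strict_right_mono)
  have "w^2 / m = n powr (- (1/2))"
    unfolding m_def w_def using n0 by (simp add: powr_power flip: powr_diff)
  also have "\<dots> = 1 / sqrt n" using n by (simp add: powr_minus_divide powr_half_sqrt)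
  finally have "(r + 18) * w^2 / m = (r + 18) / sqrt n"
    by (metis times_divide_eq_right mult.right_neutral)
  also have "\<dots> \<le> 1/2"
    using real_sqrt_le_mono[OF n(2)] r n by (simp add: field_simps)
  finally show "(r + 18) * w^2 / m \<le> 1/2" .
  have "w^5 / m = 1 / n powr (1/4)"
    unfolding m_def w_def using n0 by (simp add: powr_power powr_minus_divide flip: powr_diff)
  then show "w^5 / m \<le> 1" using ge_one_powr_ge_zero[of n "1/4"] n by simp
  show "m^3 = n^2" unfolding m_def using n by (simp add: powr_power powr_numeral)
  show "w powr (r - 2) = n powr ((r - 2) / 12)" unfolding w_def by (simp add: powr_powr)
qed

definition sum_error_const :: "real \<Rightarrow> real" where
  "sum_error_const r = max (2 * exp (6 * r^2 / 5) * (2 * (r + 18) + 2 * (800 + 20 * r))) (20 * 2 powr r)"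

lemma F_sum_scaled_bound:
  fixes n k :: nat
  assumes r: "0 \<le> r" and n: "nat \<lceil>(2 * (r + 18))^2\<rceil> + 1 \<le> n"
    and k: "max 1 (3 * lam) * real n powr (2/3) \<le> real k" "real k \<le> real n powr (3/4)"
    and lam: "\<bar>lam\<bar> \<le> real n powr (1/12)"
  defines "m \<equiv> real n powr (2/3)"
  shows "\<bar>(1/m) * (\<Sum>j = k..nat \<lfloor>real n powr (3/4)\<rfloor>. F r lam (real j / m)) - Phi r lam (real k / m)\<bar>
    \<le> sum_error_const r * \<bar>Phi r lam (real k / m)\<bar> * (real n ^ 2 / real k ^ 3)
      + sum_error_const r * real n powr ((r - 2) / 12) * exp (- G lam (real n powr (1/12)))"
proof -
  define J where "J = nat \<lfloor>real n powr (3/4)\<rfloor>"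
  define x where "x = real k / m"
  have "1 \<le> real n" "(2 * (r + 18))^2 \<le> real n" using n by linarith+
  note grid = scaled_grid_parameters[OF this r, folded m_def J_def]
  have "max 1 (3 * lam) \<le> real k / m" using k(1) grid(1) by (simp add: le_divide_eq m_def)
  then have x: "1 \<le> real k / m" "3 * lam \<le> real k / m" by simp_all
  have "k \<le> J" unfolding J_def using k(2) by (simp add: le_nat_floor)
  from F_grid_sum_approx[OF r grid(1) this x lam grid(2-5)]
  have "\<bar>(1/m) * (\<Sum>j = k..J. F r lam (real j / m)) - Phi r lam x\<bar>
      \<le> 2 * exp (6 * r^2 / 5) * (2 * (r + 18) + 2 * (800 + 20 * r)) * Phi r lam x * (real n ^ 2 / real k ^ 3)
        + 20 * 2 powr r * real n powr ((r - 2) / 12) * exp (- G lam (real n powr (1/12)))"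
    unfolding grid(7) x_def by (simp add: power_divide grid(6))
  moreover have Phi: "0 \<le> Phi r lam x" using Phi_nonneg x unfolding x_def by simp
  then have "2 * exp (6 * r^2 / 5) * (2 * (r + 18) + 2 * (800 + 20 * r)) * Phi r lam x * (real n ^ 2 / real k ^ 3)
      \<le> sum_error_const r * \<bar>Phi r lam x\<bar> * (real n ^ 2 / real k ^ 3)"
    unfolding abs_of_nonneg[OF Phi] sum_error_const_def by (intro mult_right_mono) auto
  moreover have "20 * 2 powr r * real n powr ((r - 2) / 12) * exp (- G lam (real n powr (1/12)))
      \<le> sum_error_const r * real n powr ((r - 2) / 12) * exp (- G lam (real n powr (1/12)))"
    unfolding sum_error_const_def by (intro mult_right_mono) auto
  ultimately show ?thesis unfolding J_def x_def by linarith
qed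

theorem lemma5p3:
  fixes r :: real
  assumes "r \<ge> 0"
  shows "\<exists>C N. \<forall>n::nat. \<forall>lam::real. \<forall>k::nat.
    n \<ge> N \<longrightarrow>
    max 1 (3 * lam) * real n powr (2/3) \<le> real k \<longrightarrow>
    real k \<le> real n powr (3/4) \<longrightarrow>
    \<bar>lam\<bar> \<le> real n powr (1/12) \<longrightarrow>
    (let m = real n powr (2/3);
         S = (1 / m) * (\<Sum>j = k..nat \<lfloor>real n powr (3/4)\<rfloor>.
                 (real j / m) powr r * exp (- G lam (real j / m)));
         g = (real k / m) powr r / deriv (G lam) (real k / m) * exp (- G lam (real k / m))
     in \<bar>S - g\<bar> \<le> C * \<bar>g\<bar> * (real n ^ 2 / real k ^ 3)
            + C * real n powr ((r - 2) / 12) * exp (- G lam (real n powr (1/12))))"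
  using F_sum_scaled_bound[OF assms] unfolding Let_def deriv_G F_def Phi_altdef by blast

end
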